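(* Let $n>2$ be an even integer, $a\in\mathbb{R}$, $b\in\{1,-1\}$, and for $c\in\mathbb{R}$ let $\lambda_{\min}(c)$, $\lambda_{\max}(c)$ be the smallest and largest eigenvalues of the $(n+1)\times(n+1)$ symmetric matrix $m_n(a,b,c)$ (rows/columns indexed $0,\dots,n$, $(0,0)$-entry $-nc$, $(0,j)$- and $(j,0)$-entries $b$ for $j=1,\dots,n$, lower-right block the circulant $\mathrm{circ}(c,a,0,\dots,0,a)$). Define \[c_{\mathrm{upp}}=-\frac{(n-1)+2a}{n+1},\ \lambda_{\mathrm{upp}}=\frac{2n(a-1)}{n+1},\qquad c_{\mathrm{low}}=\frac{(n-1)-2a}{n+1},\ \lambda_{\mathrm{low}}=\frac{2n(a+1)}{n+1},\] and, for $a\ne0$, $c_{\mathrm{trans}}=\dfrac{8a^2-n}{4(n+1)a}$, $\lambda_{\mathrm{trans}}=-\dfrac{n(8a^2+1)}{4(n+1)a}$. Then $\min_{c\in\mathbb{R}}\lambda_{\max}(c)$ is attained at $(c,\lambda)=(c_{\mathrm{trans}},\lambda_{\mathrm{trans}})$ if $a\le-1/4$ and at $(c_{\mathrm{low}},\lambda_{\mathrm{low}})$ if $a>-1/4$; and $\max_{c\in\mathbb{R}}\lambda_{\min}(c)$ is attained at $(c_{\mathrm{trans}},\lambda_{\mathrm{trans}})$ if $a\ge1/4$ and at $(c_{\mathrm{upp}},\lambda_{\mathrm{upp}})$ if $a<1/4$. Moreover, whenever such an extremum is attained at the transition point $(c_{\mathrm{trans}},\lambda_{\mathrm{trans}})$,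 the corresponding eigenvalue of $m_n(a,b,c_{\mathrm{trans}})$ is double, and otherwise it is single. *)

theory Defs
  imports "Jordan_Normal_Form.Char_Poly"
begin

text \<open>Lower-right block (indices 1..n) is the symmetric circulant circ(c,a,0,...,0,a):
  entry (i,j) is c if i = j, a if j - i = 1 or -1 modulo n, and 0 otherwise.\<close>
definition mmat :: "nat \<Rightarrow> real \<Rightarrow> real \<Rightarrow> real \<Rightarrow> real mat" where
  "mmat n a b c = mat (n+1) (n+1) (\<lambda>(i,j).
     if i = 0 \<and> j = 0 then - real n * c
     else if i = 0 \<or> j = 0 then b
     else if i = j then c
     else if (int j - int i) mod int n = 1 \<or> (int i - int j) mod int n = 1 then a
     else 0)"

definition lam_min :: "nat \<Rightarrow> real \<Rightarrow> real \<Rightarrow> real \<Rightarrow> real" where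
  "lam_min n a b c = Min {k. eigenvalue (mmat n a b c) k}"

definition lam_max :: "nat \<Rightarrow> real \<Rightarrow> real \<Rightarrow> real \<Rightarrow> real" where
  "lam_max n a b c = Max {k. eigenvalue (mmat n a b c) k}"

text \<open>Multiplicity of an eigenvalue: multiplicity as a root of the characteristic polynomial
  (equal to the geometric multiplicity, since the matrix is symmetric).\<close>
definition eig_mult :: "real mat \<Rightarrow> real \<Rightarrow> nat" where
  "eig_mult M k = order k (char_poly M)"

definition c_upp :: "nat \<Rightarrow> real \<Rightarrow> real" where
  "c_upp n a = - ((real n - 1) + 2*a) / (real n + 1)"
definition l_upp :: "nat \<Rightarrow> real \<Rightarrow> real" where
  "l_upp n a = 2 * real n * (a - 1) / (real n + 1)"
definition c_low :: "nat \<Rightarrow> real \<Rightarrow> real" where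
  "c_low n a = ((real n - 1) - 2*a) / (real n + 1)"
definition l_low :: "nat \<Rightarrow> real \<Rightarrow> real" where
  "l_low n a = 2 * real n * (a + 1) / (real n + 1)"
definition c_trans :: "nat \<Rightarrow> real \<Rightarrow> real" where
  "c_trans n a = (8*a^2 - real n) / (4 * (real n + 1) * a)"
definition l_trans :: "nat \<Rightarrow> real \<Rightarrow> real" where
  "l_trans n a = - (real n * (8*a^2 + 1)) / (4 * (real n + 1) * a)"

end

theory Submission
  imports Defs "Jordan_Normal_Form.Jordan_Normal_Form_Uniqueness" "Jordan_Normal_Form.Jordan_Normal_Form_Existence"
begin

(*
  Index 0 of m_n(a,b,c) is the hub and the indices 1..n form the rim of a wheel. A vector that
  is constant on the rim is an eigenvector exactly when its eigenvalue mu solves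
  (mu + n c)(mu - c - 2a) = n, and for even n the rim-alternating vector is an eigenvector with
  eigenvalue c - 2a. Writing the rim part of an eigenvector v (eigenvalue k) as its mean m plus a
  deviation y, the eigen-equations give for every l
    (l - k)|v|^2 = (l + n c) v_0^2 - 2bnm v_0 + n (l - c - 2a) m^2 + (l - c)|y|^2 - 2a <y, shift y>.
  At (c_low, l_low) the right-hand side is n (v_0 - bm)^2 + |y|^2 + a sum_j (y_j - y_(j+1))^2,
  which dominates min(1, 1 + 4a) (n (v_0 - bm)^2 + |y|^2); at (c_trans, l_trans) one gets
    a (k - l)|v|^2 = n/4 (v_0 + 4abm)^2 + a^2 sum_j (y_j + y_(j+1))^2.
  So l_low is the largest eigenvalue for a > -1/4 and l_trans for a < 0, with eigenspace spanned
  by the rim-constant vector, resp. by it and the alternating vector. For any other c, the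
  quadratic has a root beyond l or c - 2a >= l, so l cannot be improved. Multiplicities are
  eigenspace dimensions because the matrix is real symmetric, and the statements about the
  smallest eigenvalue follow from m_n(-a,-b,-c) = - m_n(a,b,c).
*)

section \<open>Eigenvalues and eigenspaces\<close>

lemma eigenvalueI:
  assumes "A \<in> carrier_mat n n" "v \<in> carrier_vec n" "v \<noteq> 0\<^sub>v n" "A *\<^sub>v v = k \<cdot>\<^sub>v v"
  shows "eigenvalue A k"
  using assms unfolding eigenvalue_def eigenvector_def by auto

lemma finite_eigenvalues:
  fixes A :: "'a::field mat"
  assumes "A \<in> carrier_mat N N"
  shows "finite {k. eigenvalue A k}"
proof -
  have "char_poly A \<noteq> 0"
    using degree_monic_char_poly[OF assms] by auto
  then show ?thesis
    using eigenvalue_root_char_poly[OF assms] poly_roots_finite by simp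
qed

lemma eigenvalue_uminus:
  fixes A :: "'a::field mat"
  assumes "A \<in> carrier_mat N N"
  shows "eigenvalue (- A) k \<longleftrightarrow> eigenvalue A (- k)"
proof -
  have eq: "- A *\<^sub>v v = k \<cdot>\<^sub>v v \<longleftrightarrow> A *\<^sub>v v = (- k) \<cdot>\<^sub>v v" if "v \<in> carrier_vec N" for v
    using that assms by (auto simp: vec_eq_iff minus_equation_iff)
  have "dim_row (- A) = N" "dim_row A = N" using assms by auto
  then show ?thesis
    unfolding eigenvalue_def eigenvector_def using eq by metis
qed

lemma eigenvalue_real_symmetric_real:
  fixes A :: "real mat"
  assumes A: "A \<in> carrier_mat N N" and sym: "transpose_mat A = A"
    and ev: "eigenvalue (map_mat complex_of_real A) z"
  shows "z \<in> \<real>"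
proof -
  let ?Ac = "map_mat complex_of_real A"
  have symA: "A $$ (i, j) = A $$ (j, i)" if "i < N" "j < N" for i j
    using that A by (metis carrier_matD index_transpose_mat(1) sym)
  from ev obtain v where v: "v \<in> carrier_vec N" "v \<noteq> 0\<^sub>v N" "?Ac *\<^sub>v v = z \<cdot>\<^sub>v v"
    unfolding eigenvalue_def eigenvector_def using A by auto
  define q where "q = (\<Sum>i<N. cnj (v $ i) * (?Ac *\<^sub>v v) $ i)"
  define r where "r = (\<Sum>i<N. (cmod (v $ i))\<^sup>2)"
  have "q = z * (\<Sum>i<N. cnj (v $ i) * v $ i)"
    unfolding q_def using v by (auto simp: sum_distrib_left intro!: sum.cong)
  also have "(\<Sum>i<N. cnj (v $ i) * v $ i) = of_real r"
    unfolding r_def of_real_sum by (intro sum.cong refl) (metis complex_norm_square mult.commute of_real_power)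
  finally have q_z: "q = z * of_real r" .
  have q_A: "q = (\<Sum>i<N. \<Sum>j<N. of_real (A $$ (i, j)) * (cnj (v $ i) * v $ j))"
    unfolding q_def using A v(1)
    by (auto simp: scalar_prod_def lessThan_atLeast0 sum_distrib_left mult.assoc intro!: sum.cong)
  have "cnj q = (\<Sum>i<N. \<Sum>j<N. of_real (A $$ (i, j)) * (v $ i * cnj (v $ j)))"
    unfolding q_A by (simp add: mult.commute)
  also have "\<dots> = (\<Sum>j<N. \<Sum>i<N. of_real (A $$ (i, j)) * (v $ i * cnj (v $ j)))"
    by (rule sum.swap)
  also have "\<dots> = q"
    unfolding q_A using symA by (auto intro!: sum.cong simp: mult.commute)
  finally have q_real: "cnj q = q" .
  obtain i where i: "i < N" "v $ i \<noteq> 0"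
    using v(1,2) by (metis eq_vecI carrier_vecD index_zero_vec)
  have "r > 0"
    unfolding r_def by (rule sum_pos2[of _ i]) (use i in auto)
  have "cnj z * of_real r = z * of_real r"
    using q_real unfolding q_z by simp
  with \<open>r > 0\<close> have "cnj z = z" by simp
  then show ?thesis by (simp add: Reals_cnj_iff)
qed

lemma char_poly_real_symmetric_splits:
  fixes A :: "real mat"
  assumes A: "A \<in> carrier_mat N N" and sym: "transpose_mat A = A"
  shows "\<exists>es. char_poly A = (\<Prod>e\<leftarrow>es. [:- e, 1:])"
proof -
  interpret map_poly_inj_idom_hom complex_of_real ..
  let ?Ac = "map_mat complex_of_real A"
  have Ac: "?Ac \<in> carrier_mat N N" using A by simp
  obtain zs where zs: "char_poly ?Ac = (\<Prod>z\<leftarrow>zs. [:- z, 1:])"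
    using char_poly_factorized[OF Ac] by auto
  have real: "of_real (Re z) = z" if "z \<in> set zs" for z
  proof -
    have "poly (char_poly ?Ac) z = 0" unfolding zs using that by (rule linear_poly_root)
    then have "eigenvalue ?Ac z" using eigenvalue_root_char_poly[OF Ac] by simp
    then show ?thesis using eigenvalue_real_symmetric_real[OF A sym] by simp
  qed
  have "map_poly complex_of_real (char_poly A) = char_poly ?Ac"
    by (rule of_real_hom.char_poly_hom[OF A, symmetric])
  also have "\<dots> = (\<Prod>e\<leftarrow>map Re zs. map_poly complex_of_real [:- e, 1:])"
    unfolding zs using real by (induction zs) auto
  also have "\<dots> = map_poly complex_of_real (\<Prod>e\<leftarrow>map Re zs. [:- e, 1:])"
    by (simp add: hom_prod_list o_def)
  finally show ?thesis by (blast dest: injectivity)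
qed

lemma mat_kernel_symmetric_pow:
  fixes S :: "real mat"
  assumes S: "S \<in> carrier_mat N N" and sym: "transpose_mat S = S"
  shows "mat_kernel (S ^\<^sub>m Suc k) = mat_kernel S"
proof -
  have sq: "S *\<^sub>v v = 0\<^sub>v N" if v: "v \<in> carrier_vec N" and "S *\<^sub>v (S *\<^sub>v v) = 0\<^sub>v N" for v
  proof -
    define w where "w = S *\<^sub>v v"
    have w: "w \<in> carrier_vec N" unfolding w_def using S v by simp
    have "w \<bullet> w = (transpose_mat S *\<^sub>v w) \<bullet> v"
      using transpose_vec_mult_scalar[OF S v w] unfolding w_def by simp
    also have "\<dots> = 0" using that v unfolding sym w_def by simp
    finally show ?thesis using w unfolding w_def[symmetric]
      by (metis conjugate_square_eq_0_vec vec_conjugate_real)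
  qed
  have "(S ^\<^sub>m Suc k) *\<^sub>v v = 0\<^sub>v N \<longleftrightarrow> S *\<^sub>v v = 0\<^sub>v N" if "v \<in> carrier_vec N" for v
    using that
  proof (induction k arbitrary: v)
    case (Suc k)
    have "(S ^\<^sub>m Suc (Suc k)) *\<^sub>v v = (S ^\<^sub>m Suc k) *\<^sub>v (S *\<^sub>v v)"
      using assoc_mult_mat_vec[OF pow_carrier_mat[OF S, of "Suc k"] S Suc.prems] by simp
    then show ?case using Suc.IH[of "S *\<^sub>v v"] sq[OF Suc.prems] S Suc.prems by auto
  qed simp
  then show ?thesis
    unfolding mat_kernel_def using S pow_carrier_mat[OF S] by auto
qed

lemma eig_mult_real_symmetric:
  fixes A :: "real mat"
  assumes A: "A \<in> carrier_mat N N" and sym: "transpose_mat A = A"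
  shows "eig_mult A e = kernel_dim (char_matrix A e)"
proof -
  \<comment> \<open>via the Jordan form, the multiplicity is the dimension of the generalised eigenspace,
    which for a symmetric matrix is the eigenspace\<close>
  obtain n_as where jnf: "jordan_nf A n_as"
    using char_poly_real_symmetric_splits[OF A sym] jordan_nf_exists[OF A] by blast
  let ?ds = "map fst [(d, e')\<leftarrow>n_as . e' = e]"
  from jnf obtain n P Q where "{A, jordan_matrix n_as, P, Q} \<subseteq> carrier_mat n n"
    unfolding jordan_nf_def using similar_matD by blast
  then have "sum_list (map fst n_as) = N"
    using A jordan_matrix_carrier[of n_as] unfolding carrier_mat_def by auto
  then have le: "d \<le> N" if "(d, e') \<in> set n_as" for d e'
    using that member_le_sum_list[of d "map fst n_as"] by force
  define S where "S = char_matrix A e"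
  have S: "S \<in> carrier_mat N N" unfolding S_def using A by simp
  have "transpose_mat S = S"
  proof -
    have "A $$ (j, i) = A $$ (i, j)" if "i < N" "j < N" for i j
      using that A by (metis carrier_matD index_transpose_mat(1) sym)
    then show ?thesis
      unfolding S_def char_matrix_def using A by (auto intro!: eq_matI)
  qed
  then have ker: "mat_kernel (S ^\<^sub>m Suc N) = mat_kernel S"
    by (rule mat_kernel_symmetric_pow[OF S])
  have "eig_mult A e = sum_list ?ds"
    unfolding eig_mult_def jordan_nf_order[OF jnf] by (simp add: case_prod_unfold)
  also have "\<dots> = (\<Sum>d \<leftarrow> ?ds. min (Suc N) d)"
    by (intro arg_cong[of _ _ sum_list] map_cong) (auto dest!: le)
  also have "\<dots> = kernel_dim (S ^\<^sub>m Suc N)"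
    unfolding S_def dim_gen_eigenspace[OF jnf, symmetric] dim_gen_eigenspace_def ..
  also have "\<dots> = kernel_dim S"
    unfolding kernel_dim_def ker using S by simp
  finally show ?thesis unfolding S_def .
qed

lemma mat_kernel_char_matrix:
  fixes A :: "'a::field mat"
  assumes "A \<in> carrier_mat N N"
  shows "mat_kernel (char_matrix A e) = {v \<in> carrier_vec N. A *\<^sub>v v = e \<cdot>\<^sub>v v}"
proof -
  have "char_matrix A e *\<^sub>v v = 0\<^sub>v N \<longleftrightarrow> A *\<^sub>v v = e \<cdot>\<^sub>v v" if "v \<in> carrier_vec N" for v
  proof (cases "v = 0\<^sub>v N")
    case True
    with assms show ?thesis by (auto intro!: eq_vecI simp: char_matrix_def)
  next
    case False
    with eigenvector_char_matrix[OF assms, of v e] assms that show ?thesis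
      by (auto simp: eigenvector_def)
  qed
  moreover note carrier_matD[OF char_matrix_closed[OF assms, of e]]
  ultimately show ?thesis
    unfolding mat_kernel_def by auto
qed

lemma (in kernel) lincomb_singleton:
  assumes "u \<in> mat_kernel A"
  shows "lincomb c {u} = c u \<cdot>\<^sub>v u"
proof -
  have "lincomb c ({} \<union> {u}) = c u \<cdot>\<^sub>v u + lincomb c {}"
    by (rule Ker.lincomb_insert) (use assms in auto)
  then show ?thesis
    using assms mat_kernelD[OF A] by (simp add: Ker.lincomb_def)
qed

lemma (in kernel) lincomb_doubleton:
  assumes "u \<in> mat_kernel A" "w \<in> mat_kernel A" "u \<noteq> w"
  shows "lincomb c {u, w} = c u \<cdot>\<^sub>v u + c w \<cdot>\<^sub>v w"
proof -
  have carr: "u \<in> carrier_vec nc" "w \<in> carrier_vec nc"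
    using assms(1,2) mat_kernelD[OF A] by auto
  have "lincomb c ({w} \<union> {u}) = c u \<cdot>\<^sub>v u + lincomb c {w}"
    by (rule Ker.lincomb_insert) (use assms in auto)
  moreover have "lincomb c ({} \<union> {w}) = c w \<cdot>\<^sub>v w + lincomb c {}"
    by (rule Ker.lincomb_insert) (use assms in auto)
  ultimately show ?thesis
    using carr by (simp add: insert_commute Ker.lincomb_def)
qed

lemma (in kernel) kernel_dim_eq_1:
  assumes u: "u \<in> mat_kernel A" "u \<noteq> 0\<^sub>v nc"
    and ker: "mat_kernel A = {\<alpha> \<cdot>\<^sub>v u | \<alpha>. True}"
  shows "kernel_dim A = 1"
proof -
  note comb = lincomb_singleton[OF u(1)]
  obtain i where i: "i < nc" "u $ i \<noteq> 0"
    using u mat_kernelD[OF A u(1)] by (metis eq_vecI carrier_vecD index_zero_vec)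
  have "lin_indpt {u}"
  proof (rule Ker.finite_lin_indpt2)
    fix c assume "lincomb c {u} = 0\<^sub>v nc"
    then have "c u * u $ i = 0"
      unfolding comb using i mat_kernelD[OF A u(1)]
      by (metis index_smult_vec(1) index_zero_vec(1) carrier_vecD)
    then show "\<forall>v\<in>{u}. c v = 0" using i by simp
  qed (use u in auto)
  moreover have "span {u} = mat_kernel A"
  proof -
    have "span {u} = {lincomb c {u} | c. c \<in> {u} \<rightarrow> UNIV}"
      by (rule Ker.finite_span) (use u in auto)
    also have "\<dots> = mat_kernel A"
    proof (intro equalityI subsetI)
      fix v assume "v \<in> {lincomb c {u} | c. c \<in> {u} \<rightarrow> UNIV}"
      then obtain c where "v = c u \<cdot>\<^sub>v u" unfolding comb by blast
      then show "v \<in> mat_kernel A" unfolding ker by blast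
    next
      fix v assume "v \<in> mat_kernel A"
      then obtain \<alpha> where "v = \<alpha> \<cdot>\<^sub>v u" unfolding ker by auto
      then have "v = lincomb (\<lambda>_. \<alpha>) {u}" unfolding comb by simp
      then show "v \<in> {lincomb c {u} | c. c \<in> {u} \<rightarrow> UNIV}" by blast
    qed
    finally show ?thesis .
  qed
  ultimately have "basis {u}"
    unfolding Ker.basis_def using u by auto
  then show ?thesis
    using Ker.dim_basis[of "{u}"] by simp
qed

lemma (in kernel) kernel_dim_eq_2:
  assumes u: "u \<in> mat_kernel A" and w: "w \<in> mat_kernel A"
    and indep: "\<And>\<alpha> \<beta>. \<alpha> \<cdot>\<^sub>v u + \<beta> \<cdot>\<^sub>v w = 0\<^sub>v nc \<Longrightarrow> \<alpha> = 0 \<and> \<beta> = 0"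
    and ker: "mat_kernel A = {\<alpha> \<cdot>\<^sub>v u + \<beta> \<cdot>\<^sub>v w | \<alpha> \<beta>. True}"
  shows "kernel_dim A = 2"
proof -
  have "u \<noteq> w"
  proof
    assume "u = w"
    then have "1 \<cdot>\<^sub>v u + (-1) \<cdot>\<^sub>v w = 0\<^sub>v nc"
      using mat_kernelD[OF A u] by (auto intro!: eq_vecI)
    from indep[OF this] show False by simp
  qed
  note comb = lincomb_doubleton[OF u w this]
  have "lin_indpt {u, w}"
    by (rule Ker.finite_lin_indpt2) (use u w indep in \<open>auto simp: comb\<close>)
  moreover have "span {u, w} = mat_kernel A"
  proof -
    have "span {u, w} = {lincomb c {u, w} | c. c \<in> {u, w} \<rightarrow> UNIV}"
      by (rule Ker.finite_span) (use u w in auto)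
    also have "\<dots> = mat_kernel A"
    proof (intro equalityI subsetI)
      fix v assume "v \<in> {lincomb c {u, w} | c. c \<in> {u, w} \<rightarrow> UNIV}"
      then obtain c where "v = c u \<cdot>\<^sub>v u + c w \<cdot>\<^sub>v w" unfolding comb by blast
      then show "v \<in> mat_kernel A" unfolding ker by blast
    next
      fix v assume "v \<in> mat_kernel A"
      then obtain \<alpha> \<beta> where "v = \<alpha> \<cdot>\<^sub>v u + \<beta> \<cdot>\<^sub>v w" unfolding ker by auto
      then have "v = lincomb (\<lambda>x. if x = u then \<alpha> else \<beta>) {u, w}"
        unfolding comb using \<open>u \<noteq> w\<close> by simp
      then show "v \<in> {lincomb c {u, w} | c. c \<in> {u, w} \<rightarrow> UNIV}" by blast
    qed
    finally show ?thesis .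
  qed
  ultimately have "basis {u, w}"
    unfolding Ker.basis_def using u w by auto
  then show ?thesis
    using Ker.dim_basis[of "{u, w}"] \<open>u \<noteq> w\<close> by simp
qed

lemma eig_mult_real_symmetric_eq_1:
  fixes A :: "real mat"
  assumes A: "A \<in> carrier_mat N N" and sym: "transpose_mat A = A"
    and u: "u \<in> carrier_vec N" "u \<noteq> 0\<^sub>v N" "A *\<^sub>v u = e \<cdot>\<^sub>v u"
    and spans: "\<And>v. v \<in> carrier_vec N \<Longrightarrow> A *\<^sub>v v = e \<cdot>\<^sub>v v \<Longrightarrow> \<exists>\<alpha>. v = \<alpha> \<cdot>\<^sub>v u"
  shows "eig_mult A e = 1"
proof -
  have K: "kernel N N (char_matrix A e)" by (rule kernel.intro) (use A in simp)
  have "mat_kernel (char_matrix A e) = {\<alpha> \<cdot>\<^sub>v u | \<alpha>. True}"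
  proof (intro equalityI subsetI)
    fix v assume "v \<in> mat_kernel (char_matrix A e)"
    then show "v \<in> {\<alpha> \<cdot>\<^sub>v u | \<alpha>. True}"
      unfolding mat_kernel_char_matrix[OF A] using spans by blast
  next
    fix v assume "v \<in> {\<alpha> \<cdot>\<^sub>v u | \<alpha>. True}"
    then show "v \<in> mat_kernel (char_matrix A e)"
      unfolding mat_kernel_char_matrix[OF A] using u A
      by (auto simp: mult_mat_vec[of A N N] smult_smult_assoc mult.commute)
  qed
  moreover have "u \<in> mat_kernel (char_matrix A e)"
    unfolding mat_kernel_char_matrix[OF A] using u by simp
  ultimately show ?thesis
    unfolding eig_mult_real_symmetric[OF A sym] using kernel.kernel_dim_eq_1[OF K _ u(2)] by blast
qed

lemma eig_mult_real_symmetric_eq_2: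
  fixes A :: "real mat"
  assumes A: "A \<in> carrier_mat N N" and sym: "transpose_mat A = A"
    and u: "u \<in> carrier_vec N" "A *\<^sub>v u = e \<cdot>\<^sub>v u"
    and w: "w \<in> carrier_vec N" "A *\<^sub>v w = e \<cdot>\<^sub>v w"
    and indep: "\<And>\<alpha> \<beta>. \<alpha> \<cdot>\<^sub>v u + \<beta> \<cdot>\<^sub>v w = 0\<^sub>v N \<Longrightarrow> \<alpha> = 0 \<and> \<beta> = 0"
    and spans: "\<And>v. v \<in> carrier_vec N \<Longrightarrow> A *\<^sub>v v = e \<cdot>\<^sub>v v \<Longrightarrow> \<exists>\<alpha> \<beta>. v = \<alpha> \<cdot>\<^sub>v u + \<beta> \<cdot>\<^sub>v w"
  shows "eig_mult A e = 2"
proof -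
  have K: "kernel N N (char_matrix A e)" by (rule kernel.intro) (use A in simp)
  have "A *\<^sub>v (\<alpha> \<cdot>\<^sub>v u + \<beta> \<cdot>\<^sub>v w) = e \<cdot>\<^sub>v (\<alpha> \<cdot>\<^sub>v u + \<beta> \<cdot>\<^sub>v w)" for \<alpha> \<beta>
    using A u w by (simp add: mult_add_distrib_mat_vec[of A N N] mult_mat_vec[of A N N]
        smult_add_distrib_vec[of _ N] smult_smult_assoc mult.commute)
  then have "mat_kernel (char_matrix A e) = {\<alpha> \<cdot>\<^sub>v u + \<beta> \<cdot>\<^sub>v w | \<alpha> \<beta>. True}"
    unfolding mat_kernel_char_matrix[OF A] using spans u w by auto
  moreover have "u \<in> mat_kernel (char_matrix A e)" "w \<in> mat_kernel (char_matrix A e)"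
    unfolding mat_kernel_char_matrix[OF A] using u w by simp_all
  ultimately show ?thesis
    unfolding eig_mult_real_symmetric[OF A sym] using kernel.kernel_dim_eq_2[OF K _ _ indep] by blast
qed

lemma eig_mult_real_symmetric_uminus:
  fixes A :: "real mat"
  assumes A: "A \<in> carrier_mat N N" and sym: "transpose_mat A = A"
  shows "eig_mult (- A) (- e) = eig_mult A e"
proof -
  have char: "char_matrix (- A) (- e) = - char_matrix A e"
    unfolding char_matrix_def using A by (auto intro!: eq_matI)
  have S: "char_matrix A e \<in> carrier_mat N N" using A by simp
  have "mat_kernel (- char_matrix A e) = mat_kernel (char_matrix A e)"
    unfolding mat_kernel_def using S carrier_matD[OF S] by (auto simp: uminus_zero_vec_eq[of _ N])
  moreover have "transpose_mat (- A) = - A"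
    by (simp add: transpose_uminus sym)
  ultimately show ?thesis
    using A by (simp add: eig_mult_real_symmetric[OF A sym] eig_mult_real_symmetric[of "- A" N] char kernel_dim_def)
qed

section \<open>Cyclic neighbours\<close>

(* Rim vertex j < n sits at matrix index Suc j; these are its two neighbours on the rim. *)
definition cyc_next :: "nat \<Rightarrow> nat \<Rightarrow> nat" where
  "cyc_next n k = Suc k mod n"

definition cyc_prev :: "nat \<Rightarrow> nat \<Rightarrow> nat" where
  "cyc_prev n k = (k + n - 1) mod n"

lemma cyc_next_less: "0 < n \<Longrightarrow> cyc_next n k < n"
  unfolding cyc_next_def by simp

lemma cyc_prev_less: "0 < n \<Longrightarrow> cyc_prev n k < n"
  unfolding cyc_prev_def by simp

lemma cyc_next_eq_iff:
  assumes "j < n" "k < n"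
  shows "k = cyc_next n j \<longleftrightarrow> j = cyc_prev n k"
  using assms unfolding cyc_next_def cyc_prev_def
  by (cases "Suc j < n") (auto simp: mod_if)

lemma cyc_prev_next: "k < n \<Longrightarrow> cyc_prev n (cyc_next n k) = k"
  using cyc_next_eq_iff[of k n "cyc_next n k"] cyc_next_less[of n k] by auto

lemma cyc_neighbours_distinct:
  assumes "k < n" "3 \<le> n"
  shows "cyc_next n k \<noteq> k" "cyc_prev n k \<noteq> k" "cyc_next n k \<noteq> cyc_prev n k"
  using assms unfolding cyc_next_def cyc_prev_def
  by (cases "k = 0"; cases "Suc k < n"; auto simp: mod_if)+

lemma int_diff_mod_eq_1_iff:
  assumes "j < n" "k < n" "2 \<le> n"
  shows "(int j - int k) mod int n = 1 \<longleftrightarrow> j = cyc_next n k"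
proof -
  have "(int j - int k) mod int n = 1 \<longleftrightarrow> int j - int k = 1 \<or> int j - int k = 1 - int n"
  proof (cases "k \<le> j")
    case True
    then show ?thesis using assms by (auto simp: mod_pos_pos_trivial)
  next
    case False
    have "(int j - int k) mod int n = (int j - int k + int n) mod int n" by simp
    also have "\<dots> = int j - int k + int n"
      using False assms by (intro mod_pos_pos_trivial) auto
    finally have "(int j - int k) mod int n = int j - int k + int n" .
    then show ?thesis using False assms by auto
  qed
  also have "\<dots> \<longleftrightarrow> j = cyc_next n k"
    using assms unfolding cyc_next_def by (cases "Suc k = n") auto
  finally show ?thesis .
qed

lemma sum_cyc_next:
  fixes f :: "nat \<Rightarrow> 'a::comm_monoid_add"
  assumes "0 < n"
  shows "(\<Sum>k<n. f (cyc_next n k)) = (\<Sum>k<n. f k)"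
proof -
  have "bij_betw (cyc_next n) {..<n} {..<n}"
  proof (rule bij_betwI[where g = "cyc_prev n"])
    show "cyc_prev n (cyc_next n k) = k" if "k \<in> {..<n}" for k
      using that cyc_prev_next by auto
    show "cyc_next n (cyc_prev n k) = k" if "k \<in> {..<n}" for k
      using that cyc_next_eq_iff[of "cyc_prev n k" n k] cyc_prev_less[OF assms] by auto
  qed (use assms cyc_next_less cyc_prev_less in auto)
  then show ?thesis by (rule sum.reindex_bij_betw)
qed

lemma sum_sq_mean_split:
  fixes x :: "nat \<Rightarrow> real"
  assumes n: "0 < n"
  defines "m \<equiv> (\<Sum>j<n. x j) / real n"
  shows "(\<Sum>j<n. (x j)\<^sup>2) = real n * m\<^sup>2 + (\<Sum>j<n. (x j - m)\<^sup>2)"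
    and "(\<Sum>j<n. x j * x (cyc_next n j))
      = real n * m\<^sup>2 + (\<Sum>j<n. (x j - m) * (x (cyc_next n j) - m))"
proof -
  have sum_x: "(\<Sum>j<n. x j) = real n * m" unfolding m_def using n by simp
  have sum_x_next: "(\<Sum>j<n. x (cyc_next n j)) = real n * m"
    using sum_cyc_next[OF n, of x] sum_x by simp
  have "(\<Sum>j<n. (x j - m)\<^sup>2) = (\<Sum>j<n. (x j)\<^sup>2) - 2 * m * (\<Sum>j<n. x j) + real n * m\<^sup>2"
    by (simp add: power2_diff sum.distrib sum_subtractf sum_distrib_left ac_simps)
  then show "(\<Sum>j<n. (x j)\<^sup>2) = real n * m\<^sup>2 + (\<Sum>j<n. (x j - m)\<^sup>2)"
    unfolding sum_x by (simp add: power2_eq_square)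
  have "(\<Sum>j<n. (x j - m) * (x (cyc_next n j) - m))
      = (\<Sum>j<n. x j * x (cyc_next n j)) - m * (\<Sum>j<n. x j) - m * (\<Sum>j<n. x (cyc_next n j)) + real n * m\<^sup>2"
    by (simp add: algebra_simps sum.distrib sum_subtractf sum_distrib_left power2_eq_square)
  then show "(\<Sum>j<n. x j * x (cyc_next n j))
      = real n * m\<^sup>2 + (\<Sum>j<n. (x j - m) * (x (cyc_next n j) - m))"
    unfolding sum_x sum_x_next by (simp add: power2_eq_square)
qed

lemma sum_cyc_next_sq_add:
  fixes y :: "nat \<Rightarrow> real"
  assumes "0 < n"
  shows "(\<Sum>j<n. (y j + y (cyc_next n j))\<^sup>2)
    = 2 * (\<Sum>j<n. (y j)\<^sup>2) + 2 * (\<Sum>j<n. y j * y (cyc_next n j))"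
  using sum_cyc_next[OF assms, of "\<lambda>j. (y j)\<^sup>2"]
  by (simp add: power2_sum sum.distrib sum_distrib_left mult.assoc)

lemma sum_cyc_next_sq_diff:
  fixes y :: "nat \<Rightarrow> real"
  assumes "0 < n"
  shows "(\<Sum>j<n. (y j - y (cyc_next n j))\<^sup>2)
    = 2 * (\<Sum>j<n. (y j)\<^sup>2) - 2 * (\<Sum>j<n. y j * y (cyc_next n j))"
  using sum_cyc_next[OF assms, of "\<lambda>j. (y j)\<^sup>2"]
  by (simp add: power2_diff sum.distrib sum_subtractf sum_distrib_left mult.assoc)

lemma sum_cyc_next_sq_diff_le:
  fixes y :: "nat \<Rightarrow> real"
  assumes "0 < n"
  shows "(\<Sum>j<n. (y j - y (cyc_next n j))\<^sup>2) \<le> 4 * (\<Sum>j<n. (y j)\<^sup>2)"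
proof -
  have "0 \<le> (\<Sum>j<n. (y j + y (cyc_next n j))\<^sup>2)"
    by (intro sum_nonneg) simp
  then show ?thesis
    unfolding sum_cyc_next_sq_diff[OF assms] sum_cyc_next_sq_add[OF assms] by simp
qed

lemma alternating_of_cyc_next:
  fixes y :: "nat \<Rightarrow> real"
  assumes "\<And>j. j < n \<Longrightarrow> y j + y (cyc_next n j) = 0"
  shows "j < n \<Longrightarrow> y j = (-1) ^ j * y 0"
proof (induction j)
  case (Suc j)
  then have "cyc_next n j = Suc j" unfolding cyc_next_def by simp
  then have "y (Suc j) = - y j" using assms[of j] Suc.prems by simp
  then show ?case using Suc by simp
qed simp

lemma alternating_cyc_next:
  assumes "even n" "j < n"
  shows "(-1::real) ^ cyc_next n j = - ((-1) ^ j)"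
proof (cases "Suc j = n")
  case True
  with assms have "odd j" by auto
  with True show ?thesis unfolding cyc_next_def by simp
qed (use assms in \<open>simp add: cyc_next_def\<close>)

lemma alternating_cyc_prev:
  assumes "even n" "j < n"
  shows "(-1::real) ^ cyc_prev n j = - ((-1) ^ j)"
proof -
  have "cyc_prev n j < n" using assms by (simp add: cyc_prev_less)
  moreover have "cyc_next n (cyc_prev n j) = j"
    using cyc_next_eq_iff[OF \<open>cyc_prev n j < n\<close> assms(2)] by simp
  ultimately show ?thesis
    using alternating_cyc_next[OF assms(1), of "cyc_prev n j"] by simp
qed

section \<open>The matrix and its eigenvectors\<close>

lemma mmat_carrier [simp]: "mmat n a b c \<in> carrier_mat (n+1) (n+1)"
  unfolding mmat_def by simp

lemma mmat_dim [simp]: "dim_row (mmat n a b c) = n + 1" "dim_col (mmat n a b c) = n + 1"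
  unfolding mmat_def by simp_all

lemma transpose_mmat: "transpose_mat (mmat n a b c) = mmat n a b c"
  unfolding mmat_def by (auto intro!: eq_matI)

lemma mmat_uminus: "mmat n (- a) (- b) (- c) = - mmat n a b c"
  unfolding mmat_def by (auto intro!: eq_matI)

lemma mmat_Suc_Suc:
  assumes "k < n" "j < n" "2 \<le> n"
  shows "mmat n a b c $$ (Suc k, Suc j)
    = (if j = k then c else if j = cyc_next n k \<or> j = cyc_prev n k then a else 0)"
proof -
  have "(int (Suc j) - int (Suc k)) mod int n = 1 \<longleftrightarrow> j = cyc_next n k"
    using int_diff_mod_eq_1_iff[of j n k] assms by simp
  moreover have "(int (Suc k) - int (Suc j)) mod int n = 1 \<longleftrightarrow> j = cyc_prev n k"
    using int_diff_mod_eq_1_iff[of k n j] cyc_next_eq_iff[of j n k] assms by simp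
  ultimately show ?thesis
    unfolding mmat_def using assms by simp
qed

lemma mmat_mult_vec_0:
  assumes "v \<in> carrier_vec (n+1)"
  shows "(mmat n a b c *\<^sub>v v) $ 0 = - real n * c * v $ 0 + b * (\<Sum>j<n. v $ Suc j)"
proof -
  have "(mmat n a b c *\<^sub>v v) $ 0 = (\<Sum>j<Suc n. mmat n a b c $$ (0, j) * v $ j)"
    using assms by (simp add: scalar_prod_def atLeast0LessThan)
  also have "\<dots> = - real n * c * v $ 0 + b * (\<Sum>j<n. v $ Suc j)"
    unfolding sum.lessThan_Suc_shift by (simp add: mmat_def sum_distrib_left)
  finally show ?thesis .
qed

lemma mmat_mult_vec_Suc:
  assumes v: "v \<in> carrier_vec (n+1)" and k: "k < n" and n: "3 \<le> n"
  shows "(mmat n a b c *\<^sub>v v) $ Suc k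
    = b * v $ 0 + c * v $ Suc k + a * v $ Suc (cyc_next n k) + a * v $ Suc (cyc_prev n k)"
proof -
  note distinct = cyc_neighbours_distinct[OF k n]
  have less: "cyc_next n k < n" "cyc_prev n k < n"
    using n by (simp_all add: cyc_next_less cyc_prev_less)
  have "(mmat n a b c *\<^sub>v v) $ Suc k = (\<Sum>j<Suc n. mmat n a b c $$ (Suc k, j) * v $ j)"
    using v k by (simp add: scalar_prod_def atLeast0LessThan)
  also have "\<dots> = b * v $ 0 + (\<Sum>j<n. mmat n a b c $$ (Suc k, Suc j) * v $ Suc j)"
    unfolding sum.lessThan_Suc_shift using k by (simp add: mmat_def)
  also have "(\<Sum>j<n. mmat n a b c $$ (Suc k, Suc j) * v $ Suc j)
    = (\<Sum>j<n. (if j = k then c * v $ Suc j else 0) + (if j = cyc_next n k then a * v $ Suc j else 0)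
             + (if j = cyc_prev n k then a * v $ Suc j else 0))"
  proof (rule sum.cong[OF refl])
    fix j assume "j \<in> {..<n}"
    then have "mmat n a b c $$ (Suc k, Suc j)
      = (if j = k then c else if j = cyc_next n k \<or> j = cyc_prev n k then a else 0)"
      using mmat_Suc_Suc[OF k, of j] n by simp
    then show "mmat n a b c $$ (Suc k, Suc j) * v $ Suc j
      = (if j = k then c * v $ Suc j else 0) + (if j = cyc_next n k then a * v $ Suc j else 0)
        + (if j = cyc_prev n k then a * v $ Suc j else 0)"
      using distinct by (cases "j = k"; cases "j = cyc_next n k"; cases "j = cyc_prev n k") simp_all
  qed
  also have "\<dots> = c * v $ Suc k + a * v $ Suc (cyc_next n k) + a * v $ Suc (cyc_prev n k)"
    using k less by (simp add: sum.distrib)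
  finally show ?thesis by (simp only: add.assoc)
qed

lemma vec_Suc_eqI:
  assumes "v \<in> carrier_vec (n+1)" "w \<in> carrier_vec (n+1)"
    and "v $ 0 = w $ 0" "\<And>j. j < n \<Longrightarrow> v $ Suc j = w $ Suc j"
  shows "v = w"
proof (rule eq_vecI)
  show "v $ i = w $ i" if "i < dim_vec w" for i
    using that assms by (cases i) auto
qed (use assms in simp)

lemma mmat_eigen_iff:
  assumes n: "3 \<le> n" and v: "v \<in> carrier_vec (n+1)"
  shows "mmat n a b c *\<^sub>v v = k \<cdot>\<^sub>v v \<longleftrightarrow>
      - real n * c * v $ 0 + b * (\<Sum>j<n. v $ Suc j) = k * v $ 0 \<and>
      (\<forall>j<n. b * v $ 0 + c * v $ Suc j + a * v $ Suc (cyc_next n j) + a * v $ Suc (cyc_prev n j)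
        = k * v $ Suc j)"
    (is "?eig \<longleftrightarrow> ?hub \<and> ?rim")
proof
  assume eig: ?eig
  have dim: "dim_vec v = n + 1" using v by simp
  have "(mmat n a b c *\<^sub>v v) $ 0 = (k \<cdot>\<^sub>v v) $ 0" unfolding eig ..
  then have ?hub unfolding mmat_mult_vec_0[OF v] using dim by simp
  moreover have ?rim
  proof (intro allI impI)
    fix j assume j: "j < n"
    have "(mmat n a b c *\<^sub>v v) $ Suc j = (k \<cdot>\<^sub>v v) $ Suc j" unfolding eig ..
    then show "b * v $ 0 + c * v $ Suc j + a * v $ Suc (cyc_next n j) + a * v $ Suc (cyc_prev n j)
        = k * v $ Suc j"
      unfolding mmat_mult_vec_Suc[OF v j n] using dim j by simp
  qed
  ultimately show "?hub \<and> ?rim" ..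
next
  assume eqs: "?hub \<and> ?rim"
  have dim: "dim_vec v = n + 1" using v by simp
  show ?eig
  proof (rule vec_Suc_eqI[of _ n])
    show "mmat n a b c *\<^sub>v v \<in> carrier_vec (n+1)"
      using mult_mat_vec_carrier[OF mmat_carrier v] .
    show "k \<cdot>\<^sub>v v \<in> carrier_vec (n+1)" using v by simp
    show "(mmat n a b c *\<^sub>v v) $ 0 = (k \<cdot>\<^sub>v v) $ 0"
      unfolding mmat_mult_vec_0[OF v] using eqs dim by simp
    show "(mmat n a b c *\<^sub>v v) $ Suc j = (k \<cdot>\<^sub>v v) $ Suc j" if "j < n" for j
      unfolding mmat_mult_vec_Suc[OF v that n] using eqs that dim by simp
  qed
qed

definition uniform_vec :: "nat \<Rightarrow> real \<Rightarrow> real vec" where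
  "uniform_vec n t = vec (n+1) (\<lambda>i. if i = 0 then t else 1)"

definition alternating_vec :: "nat \<Rightarrow> real vec" where
  "alternating_vec n = vec (n+1) (\<lambda>i. if i = 0 then 0 else (-1) ^ (i - 1))"

lemma uniform_vec_carrier [simp]: "uniform_vec n t \<in> carrier_vec (n+1)"
  and alternating_vec_carrier [simp]: "alternating_vec n \<in> carrier_vec (n+1)"
  unfolding uniform_vec_def alternating_vec_def by simp_all

lemma uniform_vec_nonzero: "0 < n \<Longrightarrow> uniform_vec n t \<noteq> 0\<^sub>v (n+1)"
proof
  assume "0 < n" "uniform_vec n t = 0\<^sub>v (n+1)"
  then have "uniform_vec n t $ 1 = 0" by simp
  with \<open>0 < n\<close> show False by (simp add: uniform_vec_def)
qed

lemma alternating_vec_nonzero: "0 < n \<Longrightarrow> alternating_vec n \<noteq> 0\<^sub>v (n+1)"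
proof
  assume "0 < n" "alternating_vec n = 0\<^sub>v (n+1)"
  then have "alternating_vec n $ 1 = 0" by simp
  with \<open>0 < n\<close> show False by (simp add: alternating_vec_def)
qed

lemma mmat_uniform_vec_eigen:
  assumes n: "3 \<le> n" and b: "b\<^sup>2 = 1" and \<mu>: "(\<mu> + real n * c) * (\<mu> - c - 2 * a) = real n"
  shows "mmat n a b c *\<^sub>v uniform_vec n (b * (\<mu> - c - 2 * a))
    = \<mu> \<cdot>\<^sub>v uniform_vec n (b * (\<mu> - c - 2 * a))"
proof -
  have "- real n * c * (b * (\<mu> - c - 2 * a)) + b * real n
      = \<mu> * (b * (\<mu> - c - 2 * a)) + b * (real n - (\<mu> + real n * c) * (\<mu> - c - 2 * a))"
    by (simp add: algebra_simps)
  also have "\<dots> = \<mu> * (b * (\<mu> - c - 2 * a))"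
    using \<mu> by simp
  finally have "- real n * c * (b * (\<mu> - c - 2 * a)) + b * real n = \<mu> * (b * (\<mu> - c - 2 * a))" .
  moreover have "b * (b * (\<mu> - c - 2 * a)) + c + 2 * a = \<mu>"
    using b by (simp flip: mult.assoc power2_eq_square)
  ultimately show ?thesis
    using n by (simp add: mmat_eigen_iff uniform_vec_def cyc_next_less cyc_prev_less algebra_simps)
qed

lemma mmat_alternating_vec_eigen:
  assumes n: "3 \<le> n" and "even n"
  shows "mmat n a b c *\<^sub>v alternating_vec n = (c - 2 * a) \<cdot>\<^sub>v alternating_vec n"
proof -
  obtain h where "n = 2 * h" using \<open>even n\<close> by blast
  moreover have "(\<Sum>j<2 * h. (-1::real) ^ j) = 0" by (induction h) auto
  ultimately have "(\<Sum>j<n. (-1::real) ^ j) = 0" by simp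
  then show ?thesis
    using n \<open>even n\<close> by (simp add: mmat_eigen_iff alternating_vec_def cyc_next_less cyc_prev_less
        alternating_cyc_next alternating_cyc_prev algebra_simps)
qed

lemma eigenvalue_mmat_quadratic:
  assumes "3 \<le> n" "b\<^sup>2 = 1" "(\<mu> + real n * c) * (\<mu> - c - 2 * a) = real n"
  shows "eigenvalue (mmat n a b c) \<mu>"
  by (rule eigenvalueI[OF mmat_carrier uniform_vec_carrier uniform_vec_nonzero
        mmat_uniform_vec_eigen[OF assms]]) (use assms(1) in simp)

lemma eigenvalue_mmat_alternating:
  assumes "3 \<le> n" "even n"
  shows "eigenvalue (mmat n a b c) (c - 2 * a)"
  by (rule eigenvalueI[OF mmat_carrier alternating_vec_carrier alternating_vec_nonzero
        mmat_alternating_vec_eigen[OF assms]]) (use assms(1) in simp)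

lemma sq_norm_pos:
  fixes v :: "real vec"
  assumes "v \<in> carrier_vec (n+1)" "v \<noteq> 0\<^sub>v (n+1)"
  shows "0 < (v $ 0)\<^sup>2 + (\<Sum>j<n. (v $ Suc j)\<^sup>2)"
proof -
  obtain i where i: "i < n + 1" "v $ i \<noteq> 0"
    using assms by (metis eq_vecI carrier_vecD index_zero_vec)
  have "0 < (\<Sum>i<n+1. (v $ i)\<^sup>2)"
    by (rule sum_pos2[of _ i]) (use i in auto)
  also have "(\<Sum>i<n+1. (v $ i)\<^sup>2) = (v $ 0)\<^sup>2 + (\<Sum>j<n. (v $ Suc j)\<^sup>2)"
    unfolding Suc_eq_plus1[symmetric] by (rule sum.lessThan_Suc_shift)
  finally show ?thesis .
qed

lemma mmat_rayleigh:
  assumes n: "3 \<le> n" and v: "v \<in> carrier_vec (n+1)" and eig: "mmat n a b c *\<^sub>v v = k \<cdot>\<^sub>v v"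
  shows "k * ((v $ 0)\<^sup>2 + (\<Sum>j<n. (v $ Suc j)\<^sup>2))
    = - real n * c * (v $ 0)\<^sup>2 + 2 * b * v $ 0 * (\<Sum>j<n. v $ Suc j)
      + c * (\<Sum>j<n. (v $ Suc j)\<^sup>2) + 2 * a * (\<Sum>j<n. v $ Suc j * v $ Suc (cyc_next n j))"
proof -
  define x where "x j = v $ Suc j" for j
  have hub: "- real n * c * v $ 0 + b * (\<Sum>j<n. x j) = k * v $ 0"
    and rim: "\<And>j. j < n \<Longrightarrow> b * v $ 0 + c * x j + a * x (cyc_next n j) + a * x (cyc_prev n j) = k * x j"
    using eig unfolding mmat_eigen_iff[OF n v] x_def by auto
  have prev_next: "(\<Sum>j<n. x j * x (cyc_prev n j)) = (\<Sum>j<n. x j * x (cyc_next n j))"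
    using sum_cyc_next[of n "\<lambda>j. x j * x (cyc_prev n j)"] n by (simp add: cyc_prev_next ac_simps)
  have "k * (\<Sum>j<n. (x j)\<^sup>2) = (\<Sum>j<n. x j * (b * v $ 0 + c * x j + a * x (cyc_next n j) + a * x (cyc_prev n j)))"
    using rim by (simp add: sum_distrib_left power2_eq_square mult.left_commute)
  also have "\<dots> = b * v $ 0 * (\<Sum>j<n. x j) + c * (\<Sum>j<n. (x j)\<^sup>2)
      + a * (\<Sum>j<n. x j * x (cyc_next n j)) + a * (\<Sum>j<n. x j * x (cyc_prev n j))"
    by (simp add: algebra_simps sum.distrib sum_distrib_left power2_eq_square)
  also have "\<dots> = b * v $ 0 * (\<Sum>j<n. x j) + c * (\<Sum>j<n. (x j)\<^sup>2)
      + 2 * a * (\<Sum>j<n. x j * x (cyc_next n j))"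
    unfolding prev_next by (simp add: algebra_simps)
  finally have "k * (\<Sum>j<n. (x j)\<^sup>2) = b * v $ 0 * (\<Sum>j<n. x j) + c * (\<Sum>j<n. (x j)\<^sup>2)
      + 2 * a * (\<Sum>j<n. x j * x (cyc_next n j))" .
  moreover have "k * (v $ 0)\<^sup>2 = - real n * c * (v $ 0)\<^sup>2 + b * v $ 0 * (\<Sum>j<n. x j)"
    using arg_cong[OF hub, of "\<lambda>t. v $ 0 * t"] by (simp add: algebra_simps power2_eq_square)
  ultimately show ?thesis
    unfolding x_def by (simp add: algebra_simps)
qed

lemma mmat_eigen_gap:
  assumes n: "3 \<le> n" and v: "v \<in> carrier_vec (n+1)" and eig: "mmat n a b c *\<^sub>v v = k \<cdot>\<^sub>v v"
  defines "m \<equiv> (\<Sum>j<n. v $ Suc j) / real n"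
  shows "(l - k) * ((v $ 0)\<^sup>2 + (\<Sum>j<n. (v $ Suc j)\<^sup>2))
    = (l + real n * c) * (v $ 0)\<^sup>2 - 2 * b * real n * m * v $ 0 + real n * (l - c - 2 * a) * m\<^sup>2
      + (l - c) * (\<Sum>j<n. (v $ Suc j - m)\<^sup>2)
      - 2 * a * (\<Sum>j<n. (v $ Suc j - m) * (v $ Suc (cyc_next n j) - m))"
proof -
  have n0: "0 < n" using n by simp
  note split = sum_sq_mean_split[OF n0, of "\<lambda>j. v $ Suc j", folded m_def]
  have sum_x: "(\<Sum>j<n. v $ Suc j) = real n * m" unfolding m_def using n0 by simp
  have "(l - k) * ((v $ 0)\<^sup>2 + (\<Sum>j<n. (v $ Suc j)\<^sup>2))
      = l * ((v $ 0)\<^sup>2 + (\<Sum>j<n. (v $ Suc j)\<^sup>2)) - k * ((v $ 0)\<^sup>2 + (\<Sum>j<n. (v $ Suc j)\<^sup>2))"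
    by (simp add: algebra_simps)
  also have "\<dots> = l * ((v $ 0)\<^sup>2 + (\<Sum>j<n. (v $ Suc j)\<^sup>2)) + real n * c * (v $ 0)\<^sup>2
      - 2 * b * v $ 0 * (\<Sum>j<n. v $ Suc j) - c * (\<Sum>j<n. (v $ Suc j)\<^sup>2)
      - 2 * a * (\<Sum>j<n. v $ Suc j * v $ Suc (cyc_next n j))"
    unfolding mmat_rayleigh[OF n v eig] by simp
  also have "\<dots> = (l + real n * c) * (v $ 0)\<^sup>2 - 2 * b * real n * m * v $ 0 + real n * (l - c - 2 * a) * m\<^sup>2
      + (l - c) * (\<Sum>j<n. (v $ Suc j - m)\<^sup>2)
      - 2 * a * (\<Sum>j<n. (v $ Suc j - m) * (v $ Suc (cyc_next n j) - m))"
    unfolding split sum_x by (simp add: algebra_simps)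
  finally show ?thesis .
qed

section \<open>Optimal extremal eigenvalues\<close>

lemma c_low_l_low:
  shows "l_low n a + real n * c_low n a = real n"
    and "l_low n a - c_low n a = 1 + 2 * a"
proof -
  have "real n + 1 \<noteq> 0" by (simp add: add_nonneg_eq_0_iff)
  then show "l_low n a + real n * c_low n a = real n" "l_low n a - c_low n a = 1 + 2 * a"
    unfolding l_low_def c_low_def by (simp_all add: divide_simps) (simp_all add: algebra_simps)
qed

lemma c_trans_l_trans:
  assumes "a \<noteq> 0"
  shows "l_trans n a + real n * c_trans n a = - real n / (4 * a)"
    and "l_trans n a - c_trans n a = - 2 * a"
proof -
  have "real n + 1 \<noteq> 0" by (simp add: add_nonneg_eq_0_iff)
  with assms show "l_trans n a + real n * c_trans n a = - real n / (4 * a)"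
      "l_trans n a - c_trans n a = - 2 * a"
    unfolding l_trans_def c_trans_def
    by (simp_all add: divide_simps) (simp_all add: algebra_simps power2_eq_square)
qed

lemma extremal_points_uminus:
  "c_upp n a = - c_low n (- a)" "l_upp n a = - l_low n (- a)"
  "c_trans n (- a) = - c_trans n a" "l_trans n (- a) = - l_trans n a"
  unfolding c_upp_def c_low_def l_upp_def l_low_def c_trans_def l_trans_def
  by (simp_all only: power2_minus mult_minus_right divide_minus_right)
    (simp_all add: algebra_simps minus_divide_left)

lemma mmat_c_low_gap:
  assumes n: "3 \<le> n" and b: "b\<^sup>2 = 1" and v: "v \<in> carrier_vec (n+1)"
    and eig: "mmat n a b (c_low n a) *\<^sub>v v = k \<cdot>\<^sub>v v"
  defines "m \<equiv> (\<Sum>j<n. v $ Suc j) / real n"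
  shows "(l_low n a - k) * ((v $ 0)\<^sup>2 + (\<Sum>j<n. (v $ Suc j)\<^sup>2))
    = real n * (v $ 0 - b * m)\<^sup>2 + (\<Sum>j<n. (v $ Suc j - m)\<^sup>2)
      + a * (\<Sum>j<n. (v $ Suc j - v $ Suc (cyc_next n j))\<^sup>2)"
proof -
  define Y where "Y = (\<Sum>j<n. (v $ Suc j - m)\<^sup>2)"
  define Z where "Z = (\<Sum>j<n. (v $ Suc j - m) * (v $ Suc (cyc_next n j) - m))"
  have diff: "(\<Sum>j<n. (v $ Suc j - v $ Suc (cyc_next n j))\<^sup>2) = 2 * Y - 2 * Z"
    using sum_cyc_next_sq_diff[of n "\<lambda>j. v $ Suc j - m"] n unfolding Y_def Z_def by simp
  have "(l_low n a - k) * ((v $ 0)\<^sup>2 + (\<Sum>j<n. (v $ Suc j)\<^sup>2))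
      = (l_low n a + real n * c_low n a) * (v $ 0)\<^sup>2 - 2 * b * real n * m * v $ 0
        + real n * (l_low n a - c_low n a - 2 * a) * m\<^sup>2 + (l_low n a - c_low n a) * Y - 2 * a * Z"
    unfolding Y_def Z_def m_def by (rule mmat_eigen_gap[OF n v eig])
  also have "\<dots> = real n * (v $ 0 - b * m)\<^sup>2 + Y + a * (2 * Y - 2 * Z)"
    unfolding c_low_l_low using b by (simp add: power2_eq_square algebra_simps)
  finally show ?thesis unfolding diff Y_def .
qed

lemma mmat_c_low_gap_ge:
  assumes n: "3 \<le> n" and b: "b\<^sup>2 = 1" and v: "v \<in> carrier_vec (n+1)"
    and eig: "mmat n a b (c_low n a) *\<^sub>v v = k \<cdot>\<^sub>v v"
  defines "m \<equiv> (\<Sum>j<n. v $ Suc j) / real n"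
  shows "min 1 (1 + 4 * a) * (real n * (v $ 0 - b * m)\<^sup>2 + (\<Sum>j<n. (v $ Suc j - m)\<^sup>2))
    \<le> (l_low n a - k) * ((v $ 0)\<^sup>2 + (\<Sum>j<n. (v $ Suc j)\<^sup>2))"
proof -
  define H where "H = real n * (v $ 0 - b * m)\<^sup>2"
  define Y where "Y = (\<Sum>j<n. (v $ Suc j - m)\<^sup>2)"
  define D where "D = (\<Sum>j<n. (v $ Suc j - v $ Suc (cyc_next n j))\<^sup>2)"
  have H: "0 \<le> H" and Y: "0 \<le> Y" and D: "0 \<le> D"
    unfolding H_def Y_def D_def by (auto intro: sum_nonneg)
  have "D \<le> 4 * Y"
    using sum_cyc_next_sq_diff_le[of n "\<lambda>j. v $ Suc j - m"] n unfolding D_def Y_def by simp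
  then have "min 1 (1 + 4 * a) * (H + Y) \<le> H + Y + a * D"
  proof (cases "0 \<le> a")
    case True
    have "min 1 (1 + 4 * a) * (H + Y) \<le> 1 * (H + Y)"
      by (intro mult_right_mono) (use H Y in auto)
    moreover have "0 \<le> a * D" using True D by simp
    ultimately show ?thesis by simp
  next
    case False
    have "min 1 (1 + 4 * a) * (H + Y) \<le> (1 + 4 * a) * (H + Y)"
      by (intro mult_right_mono) (use H Y in auto)
    moreover have "a * (4 * Y) \<le> a * D"
      using False \<open>D \<le> 4 * Y\<close> by (intro mult_left_mono_neg) auto
    moreover have "4 * a * H \<le> 0"
      using False H by (simp add: mult_nonpos_nonneg)
    ultimately show ?thesis by (simp add: algebra_simps)
  qed
  also have "\<dots> = (l_low n a - k) * ((v $ 0)\<^sup>2 + (\<Sum>j<n. (v $ Suc j)\<^sup>2))"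
    unfolding H_def Y_def D_def m_def by (rule mmat_c_low_gap[OF n b v eig, symmetric])
  finally show ?thesis unfolding H_def Y_def .
qed

lemma mmat_c_trans_gap:
  assumes n: "3 \<le> n" and b: "b\<^sup>2 = 1" and a: "a \<noteq> 0" and v: "v \<in> carrier_vec (n+1)"
    and eig: "mmat n a b (c_trans n a) *\<^sub>v v = k \<cdot>\<^sub>v v"
  defines "m \<equiv> (\<Sum>j<n. v $ Suc j) / real n"
  shows "a * (k - l_trans n a) * ((v $ 0)\<^sup>2 + (\<Sum>j<n. (v $ Suc j)\<^sup>2))
    = real n / 4 * (v $ 0 + 4 * a * b * m)\<^sup>2
      + a\<^sup>2 * (\<Sum>j<n. (v $ Suc j + v $ Suc (cyc_next n j) - 2 * m)\<^sup>2)"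
proof -
  define Y where "Y = (\<Sum>j<n. (v $ Suc j - m)\<^sup>2)"
  define Z where "Z = (\<Sum>j<n. (v $ Suc j - m) * (v $ Suc (cyc_next n j) - m))"
  define p where "p = - real n / (4 * a)"
  have ap: "a * p = - real n / 4" unfolding p_def using a by simp
  have add: "(\<Sum>j<n. (v $ Suc j + v $ Suc (cyc_next n j) - 2 * m)\<^sup>2) = 2 * Y + 2 * Z"
    using sum_cyc_next_sq_add[of n "\<lambda>j. v $ Suc j - m"] n unfolding Y_def Z_def
    by (simp add: algebra_simps)
  have "(l_trans n a - k) * ((v $ 0)\<^sup>2 + (\<Sum>j<n. (v $ Suc j)\<^sup>2))
      = (l_trans n a + real n * c_trans n a) * (v $ 0)\<^sup>2 - 2 * b * real n * m * v $ 0
        + real n * (l_trans n a - c_trans n a - 2 * a) * m\<^sup>2 + (l_trans n a - c_trans n a) * Y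
        - 2 * a * Z"
    unfolding Y_def Z_def m_def by (rule mmat_eigen_gap[OF n v eig])
  also have "\<dots> = p * (v $ 0)\<^sup>2 - 2 * b * real n * m * v $ 0 - 4 * a * real n * m\<^sup>2 - 2 * a * Y - 2 * a * Z"
    unfolding c_trans_l_trans[OF a] p_def by (simp add: algebra_simps)
  finally have gap: "(l_trans n a - k) * ((v $ 0)\<^sup>2 + (\<Sum>j<n. (v $ Suc j)\<^sup>2))
      = p * (v $ 0)\<^sup>2 - 2 * b * real n * m * v $ 0 - 4 * a * real n * m\<^sup>2 - 2 * a * Y - 2 * a * Z" .
  have "a * (k - l_trans n a) * ((v $ 0)\<^sup>2 + (\<Sum>j<n. (v $ Suc j)\<^sup>2))
      = - a * ((l_trans n a - k) * ((v $ 0)\<^sup>2 + (\<Sum>j<n. (v $ Suc j)\<^sup>2)))"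
    by (simp add: algebra_simps)
  also have "\<dots> = - (a * p) * (v $ 0)\<^sup>2 + 2 * a * b * real n * m * v $ 0 + 4 * a\<^sup>2 * real n * m\<^sup>2
        + a\<^sup>2 * (2 * Y + 2 * Z)"
    unfolding gap by (simp add: algebra_simps power2_eq_square)
  also have "\<dots> = real n / 4 * (v $ 0 + 4 * a * b * m)\<^sup>2 + a\<^sup>2 * (2 * Y + 2 * Z)"
    unfolding ap using b by (simp add: power2_eq_square algebra_simps)
  finally show ?thesis unfolding add .
qed

lemma quadratic_root_ge:
  fixes p q r l :: real
  assumes "(l + p) * (l - q) \<le> r"
  shows "\<exists>\<mu>\<ge>l. (\<mu> + p) * (\<mu> - q) = r"
proof -
  define D where "D = (p + q)\<^sup>2 + 4 * r"
  have "(2 * l + p - q)\<^sup>2 = 4 * ((l + p) * (l - q)) + (p + q)\<^sup>2"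
    by (simp add: power2_eq_square algebra_simps)
  then have le: "(2 * l + p - q)\<^sup>2 \<le> D"
    unfolding D_def using assms by linarith
  then have D: "0 \<le> D" by (meson order_trans zero_le_power2)
  define \<mu> where "\<mu> = (q - p + sqrt D) / 2"
  have "l \<le> \<mu>"
    using real_le_rsqrt[OF le] unfolding \<mu>_def by simp
  moreover have "(\<mu> + p) * (\<mu> - q) = ((sqrt D)\<^sup>2 - (p + q)\<^sup>2) / 4"
    unfolding \<mu>_def by (simp add: power2_eq_square field_simps)
  then have "(\<mu> + p) * (\<mu> - q) = r"
    using D unfolding D_def by simp
  ultimately show ?thesis by blast
qed

lemma lam_max_ge:
  assumes "eigenvalue (mmat n a b c) l"
  shows "l \<le> lam_max n a b c"
  unfolding lam_max_def using assms finite_eigenvalues[OF mmat_carrier] by (intro Max_ge) auto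

lemma lam_max_eqI:
  assumes "eigenvalue (mmat n a b c) l" "\<And>k. eigenvalue (mmat n a b c) k \<Longrightarrow> k \<le> l"
  shows "lam_max n a b c = l"
  unfolding lam_max_def using assms finite_eigenvalues[OF mmat_carrier] by (intro Max_eqI) auto

lemma lam_max_ge_of_quadratic:
  assumes n: "3 \<le> n" and b: "b\<^sup>2 = 1" and l: "(l + real n * c) * (l - c - 2 * a) \<le> real n"
  shows "l \<le> lam_max n a b c"
proof -
  obtain \<mu> where \<mu>: "l \<le> \<mu>" "(\<mu> + real n * c) * (\<mu> - c - 2 * a) = real n"
    using quadratic_root_ge[of l "real n * c" "c + 2 * a" "real n"] l by (auto simp: diff_diff_eq)
  have "\<mu> \<le> lam_max n a b c"
    by (intro lam_max_ge eigenvalue_mmat_quadratic[OF n b \<mu>(2)])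
  with \<mu>(1) show ?thesis by simp
qed

(* The hypotheses only provide an eigenvalue: Min and Max of the empty set are unspecified. *)
lemma lam_min_eq_uminus_lam_max:
  assumes "3 \<le> n" "even n"
  shows "lam_min n a b c = - lam_max n (- a) (- b) (- c)"
proof -
  let ?E = "{k. eigenvalue (mmat n a b c) k}"
  have "{k. eigenvalue (mmat n (- a) (- b) (- c)) k} = uminus ` ?E"
    unfolding mmat_uminus eigenvalue_uminus[OF mmat_carrier]
    by (auto simp: image_iff) (metis minus_minus)
  moreover have "finite ?E" by (rule finite_eigenvalues[OF mmat_carrier])
  moreover have "?E \<noteq> {}"
    using eigenvalue_mmat_alternating[OF assms] by blast
  ultimately show ?thesis
    unfolding lam_min_def lam_max_def by (simp add: image_image)
qed

lemma mmat_c_low_uniform_vec: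
  assumes "3 \<le> n" "b\<^sup>2 = 1"
  shows "mmat n a b (c_low n a) *\<^sub>v uniform_vec n b = l_low n a \<cdot>\<^sub>v uniform_vec n b"
proof -
  have root: "(l_low n a + real n * c_low n a) * (l_low n a - c_low n a - 2 * a) = real n"
    by (simp add: c_low_l_low)
  have "b * (l_low n a - c_low n a - 2 * a) = b"
    by (simp add: c_low_l_low)
  with mmat_uniform_vec_eigen[OF assms root] show ?thesis
    by simp
qed

lemma eigenvalue_c_low_le:
  assumes n: "3 \<le> n" and b: "b\<^sup>2 = 1" and a: "- 1 / 4 < a"
    and k: "eigenvalue (mmat n a b (c_low n a)) k"
  shows "k \<le> l_low n a"
proof -
  obtain v where v: "v \<in> carrier_vec (n+1)" "v \<noteq> 0\<^sub>v (n+1)"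
    "mmat n a b (c_low n a) *\<^sub>v v = k \<cdot>\<^sub>v v"
    using k unfolding eigenvalue_def eigenvector_def mmat_dim by blast
  define m where "m = (\<Sum>j<n. v $ Suc j) / real n"
  have "0 \<le> min 1 (1 + 4 * a) * (real n * (v $ 0 - b * m)\<^sup>2 + (\<Sum>j<n. (v $ Suc j - m)\<^sup>2))"
    using a by (intro mult_nonneg_nonneg add_nonneg_nonneg sum_nonneg) auto
  also have "\<dots> \<le> (l_low n a - k) * ((v $ 0)\<^sup>2 + (\<Sum>j<n. (v $ Suc j)\<^sup>2))"
    using mmat_c_low_gap_ge[OF n b v(1,3)] unfolding m_def .
  finally show ?thesis
    using sq_norm_pos[OF v(1,2)] by (simp add: zero_le_mult_iff)
qed

lemma eigenspace_c_low:
  assumes n: "3 \<le> n" and b: "b\<^sup>2 = 1" and a: "- 1 / 4 < a"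
    and v: "v \<in> carrier_vec (n+1)" and eig: "mmat n a b (c_low n a) *\<^sub>v v = l_low n a \<cdot>\<^sub>v v"
  shows "v = ((\<Sum>j<n. v $ Suc j) / real n) \<cdot>\<^sub>v uniform_vec n b"
proof -
  define m where "m = (\<Sum>j<n. v $ Suc j) / real n"
  have "min 1 (1 + 4 * a) * (real n * (v $ 0 - b * m)\<^sup>2 + (\<Sum>j<n. (v $ Suc j - m)\<^sup>2)) \<le> 0"
    using mmat_c_low_gap_ge[OF n b v eig] unfolding m_def by simp
  moreover have "0 < min 1 (1 + 4 * a)" using a by simp
  ultimately have "real n * (v $ 0 - b * m)\<^sup>2 + (\<Sum>j<n. (v $ Suc j - m)\<^sup>2) \<le> 0"
    by (simp add: mult_le_0_iff)
  moreover have "0 \<le> (\<Sum>j<n. (v $ Suc j - m)\<^sup>2)" by (intro sum_nonneg) simp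
  moreover have "0 \<le> real n * (v $ 0 - b * m)\<^sup>2" by simp
  ultimately have hub: "real n * (v $ 0 - b * m)\<^sup>2 = 0" and rim: "(\<Sum>j<n. (v $ Suc j - m)\<^sup>2) = 0"
    by linarith+
  have "v $ 0 = b * m" using hub n by simp
  moreover have "v $ Suc j = m" if "j < n" for j
    using sum_nonneg_0[of "{..<n}" "\<lambda>j. (v $ Suc j - m)\<^sup>2" j] rim that by simp
  ultimately show ?thesis
    unfolding m_def[symmetric] using v by (intro vec_Suc_eqI[of _ n]) (simp_all add: uniform_vec_def)
qed

lemma l_low_le_lam_max:
  assumes n: "3 \<le> n" and b: "b\<^sup>2 = 1"
  shows "l_low n a \<le> lam_max n a b c"
proof (rule lam_max_ge_of_quadratic[OF n b])
  have "l_low n a + real n * c = real n + real n * (c - c_low n a)"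
    using c_low_l_low(1)[of n a] by (simp add: algebra_simps)
  moreover have "l_low n a - c - 2 * a = 1 - (c - c_low n a)"
    using c_low_l_low(2)[of n a] by simp
  ultimately have "(l_low n a + real n * c) * (l_low n a - c - 2 * a)
      = (real n + real n * (c - c_low n a)) * (1 - (c - c_low n a))"
    by simp
  also have "\<dots> = real n - real n * (c - c_low n a)\<^sup>2"
    by (simp add: algebra_simps power2_eq_square)
  finally show "(l_low n a + real n * c) * (l_low n a - c - 2 * a) \<le> real n" by simp
qed

lemma lam_max_c_low:
  assumes n: "3 \<le> n" and b: "b\<^sup>2 = 1" and a: "- 1 / 4 < a"
  shows "lam_max n a b (c_low n a) = l_low n a"
    and "l_low n a \<le> lam_max n a b c"
    and "eig_mult (mmat n a b (c_low n a)) (l_low n a) = 1"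
proof -
  note u = mmat_c_low_uniform_vec[OF n b]
  have nonzero: "uniform_vec n b \<noteq> 0\<^sub>v (n+1)"
    by (rule uniform_vec_nonzero) (use n in simp)
  show "lam_max n a b (c_low n a) = l_low n a"
    by (rule lam_max_eqI[OF eigenvalueI[OF mmat_carrier uniform_vec_carrier nonzero u]
          eigenvalue_c_low_le[OF n b a]])
  show "l_low n a \<le> lam_max n a b c"
    by (rule l_low_le_lam_max[OF n b])
  show "eig_mult (mmat n a b (c_low n a)) (l_low n a) = 1"
    by (rule eig_mult_real_symmetric_eq_1[OF mmat_carrier transpose_mmat uniform_vec_carrier nonzero u])
      (use eigenspace_c_low[OF n b a] in blast)
qed

lemma mmat_c_trans_uniform_vec:
  assumes "3 \<le> n" "b\<^sup>2 = 1" "a \<noteq> 0"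
  shows "mmat n a b (c_trans n a) *\<^sub>v uniform_vec n (- 4 * a * b)
    = l_trans n a \<cdot>\<^sub>v uniform_vec n (- 4 * a * b)"
proof -
  have root: "(l_trans n a + real n * c_trans n a) * (l_trans n a - c_trans n a - 2 * a) = real n"
    using assms(3) by (simp add: c_trans_l_trans)
  have "b * (l_trans n a - c_trans n a - 2 * a) = - 4 * a * b"
    using assms(3) by (simp add: c_trans_l_trans)
  with mmat_uniform_vec_eigen[OF assms(1,2) root] show ?thesis
    by simp
qed

lemma mmat_c_trans_alternating_vec:
  assumes "3 \<le> n" "even n" "a \<noteq> 0"
  shows "mmat n a b (c_trans n a) *\<^sub>v alternating_vec n = l_trans n a \<cdot>\<^sub>v alternating_vec n"
proof -
  have "c_trans n a - 2 * a = l_trans n a"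
    using c_trans_l_trans(2)[OF assms(3), of n] by simp
  with mmat_alternating_vec_eigen[OF assms(1,2)] show ?thesis
    by simp
qed

lemma eigenvalue_c_trans_le:
  assumes n: "3 \<le> n" and b: "b\<^sup>2 = 1" and a: "a < 0"
    and k: "eigenvalue (mmat n a b (c_trans n a)) k"
  shows "k \<le> l_trans n a"
proof -
  obtain v where v: "v \<in> carrier_vec (n+1)" "v \<noteq> 0\<^sub>v (n+1)"
    "mmat n a b (c_trans n a) *\<^sub>v v = k \<cdot>\<^sub>v v"
    using k unfolding eigenvalue_def eigenvector_def mmat_dim by blast
  have "a \<noteq> 0" using a by simp
  have "0 \<le> a * (k - l_trans n a) * ((v $ 0)\<^sup>2 + (\<Sum>j<n. (v $ Suc j)\<^sup>2))"
    unfolding mmat_c_trans_gap[OF n b \<open>a \<noteq> 0\<close> v(1,3)]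
    by (intro add_nonneg_nonneg mult_nonneg_nonneg sum_nonneg) auto
  then show ?thesis
    using sq_norm_pos[OF v(1,2)] a by (simp add: zero_le_mult_iff)
qed

lemma eigenspace_c_trans:
  assumes n: "3 \<le> n" and b: "b\<^sup>2 = 1" and a: "a \<noteq> 0"
    and v: "v \<in> carrier_vec (n+1)" and eig: "mmat n a b (c_trans n a) *\<^sub>v v = l_trans n a \<cdot>\<^sub>v v"
  defines "m \<equiv> (\<Sum>j<n. v $ Suc j) / real n"
  shows "v = m \<cdot>\<^sub>v uniform_vec n (- 4 * a * b) + (v $ Suc 0 - m) \<cdot>\<^sub>v alternating_vec n"
proof -
  have "real n / 4 * (v $ 0 + 4 * a * b * m)\<^sup>2
      + a\<^sup>2 * (\<Sum>j<n. (v $ Suc j + v $ Suc (cyc_next n j) - 2 * m)\<^sup>2) = 0"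
    using mmat_c_trans_gap[OF n b a v eig] unfolding m_def by simp
  moreover have "0 \<le> a\<^sup>2 * (\<Sum>j<n. (v $ Suc j + v $ Suc (cyc_next n j) - 2 * m)\<^sup>2)"
    by (intro mult_nonneg_nonneg sum_nonneg) simp_all
  moreover have "0 \<le> real n / 4 * (v $ 0 + 4 * a * b * m)\<^sup>2" by simp
  ultimately have hub: "real n / 4 * (v $ 0 + 4 * a * b * m)\<^sup>2 = 0"
    and "a\<^sup>2 * (\<Sum>j<n. (v $ Suc j + v $ Suc (cyc_next n j) - 2 * m)\<^sup>2) = 0"
    by linarith+
  then have rim: "(\<Sum>j<n. (v $ Suc j + v $ Suc (cyc_next n j) - 2 * m)\<^sup>2) = 0"
    using a by simp
  have "v $ Suc j - m = (-1) ^ j * (v $ Suc 0 - m)" if "j < n" for j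
  proof (rule alternating_of_cyc_next[of n "\<lambda>j. v $ Suc j - m", OF _ that])
    fix i assume "i < n"
    then show "v $ Suc i - m + (v $ Suc (cyc_next n i) - m) = 0"
      using sum_nonneg_0[of "{..<n}" "\<lambda>j. (v $ Suc j + v $ Suc (cyc_next n j) - 2 * m)\<^sup>2" i] rim
      by simp
  qed
  moreover have "v $ 0 = - 4 * a * b * m" using hub n by simp
  ultimately show ?thesis
    using v by (intro vec_Suc_eqI[of _ n]) (simp_all add: uniform_vec_def alternating_vec_def algebra_simps)
qed

lemma l_trans_le_lam_max:
  assumes n: "3 \<le> n" and "even n" and b: "b\<^sup>2 = 1" and a: "a \<le> - 1 / 4"
  shows "l_trans n a \<le> lam_max n a b c"
proof (cases "c_trans n a \<le> c")
  case True
  then have "l_trans n a \<le> c - 2 * a" using c_trans_l_trans(2)[of a n] a by simp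
  also have "\<dots> \<le> lam_max n a b c"
    by (rule lam_max_ge[OF eigenvalue_mmat_alternating[OF n \<open>even n\<close>]])
  finally show ?thesis .
next
  case False
  have a0: "a \<noteq> 0" "a < 0" using a by auto
  define p where "p = - real n / (4 * a)"
  have ap: "4 * a * p = - real n" unfolding p_def using a0 by simp
  define t where "t = c_trans n a - c"
  have t: "0 < t" using False unfolding t_def by simp
  have "1 \<le> 16 * a\<^sup>2"
    using a mult_mono[of "1/4" "- a" "1/4" "- a"] by (simp add: power2_eq_square)
  moreover have "4 * a * (p + 4 * a * real n) = real n * (16 * a\<^sup>2 - 1)"
    using ap by (simp add: algebra_simps power2_eq_square)
  ultimately have "0 \<le> 4 * a * (p + 4 * a * real n)" by simp
  then have "p + 4 * a * real n \<le> 0"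
    using a0(2) by (simp add: zero_le_mult_iff)
  moreover have "0 \<le> real n * t" using t by simp
  ultimately have "p + 4 * a * real n - real n * t \<le> 0" by linarith
  then have "t * (p + 4 * a * real n - real n * t) \<le> 0"
    using t by (intro mult_nonneg_nonpos) auto
  moreover have "(l_trans n a + real n * c) * (l_trans n a - c - 2 * a)
      = real n + t * (p + 4 * a * real n - real n * t)"
  proof -
    have e1: "l_trans n a + real n * c = p - real n * t"
      and e2: "l_trans n a - c - 2 * a = t - 4 * a"
      using c_trans_l_trans[OF a0(1), of n, folded p_def] unfolding t_def
      by (simp_all add: algebra_simps)
    have "(p - real n * t) * (t - 4 * a) = - (4 * a * p) + t * (p + 4 * a * real n - real n * t)"
      by (simp add: algebra_simps)
    then show ?thesis unfolding e1 e2 ap by simp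
  qed
  ultimately show ?thesis
    by (intro lam_max_ge_of_quadratic[OF n b]) simp
qed

lemma lam_max_c_trans:
  assumes n: "3 \<le> n" and "even n" and b: "b\<^sup>2 = 1" and a: "a \<le> - 1 / 4"
  shows "lam_max n a b (c_trans n a) = l_trans n a"
    and "l_trans n a \<le> lam_max n a b c"
proof -
  have a0: "a \<noteq> 0" "a < 0" using a by auto
  have nonzero: "uniform_vec n (- 4 * a * b) \<noteq> 0\<^sub>v (n+1)"
    by (rule uniform_vec_nonzero) (use n in simp)
  show "lam_max n a b (c_trans n a) = l_trans n a"
    by (rule lam_max_eqI[OF eigenvalueI[OF mmat_carrier uniform_vec_carrier nonzero
            mmat_c_trans_uniform_vec[OF n b a0(1)]] eigenvalue_c_trans_le[OF n b a0(2)]])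
  show "l_trans n a \<le> lam_max n a b c"
    by (rule l_trans_le_lam_max[OF n \<open>even n\<close> b a])
qed

lemma eig_mult_l_trans:
  assumes n: "3 \<le> n" and "even n" and b: "b\<^sup>2 = 1" and a: "a \<noteq> 0"
  shows "eig_mult (mmat n a b (c_trans n a)) (l_trans n a) = 2"
proof (rule eig_mult_real_symmetric_eq_2[OF mmat_carrier transpose_mmat
      uniform_vec_carrier mmat_c_trans_uniform_vec[OF n b a]
      alternating_vec_carrier mmat_c_trans_alternating_vec[OF n \<open>even n\<close> a]])
  fix \<alpha> \<beta> assume "\<alpha> \<cdot>\<^sub>v uniform_vec n (- 4 * a * b) + \<beta> \<cdot>\<^sub>v alternating_vec n = 0\<^sub>v (n+1)"
  then have "(\<alpha> \<cdot>\<^sub>v uniform_vec n (- 4 * a * b) + \<beta> \<cdot>\<^sub>v alternating_vec n) $ 0 = 0"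
    and "(\<alpha> \<cdot>\<^sub>v uniform_vec n (- 4 * a * b) + \<beta> \<cdot>\<^sub>v alternating_vec n) $ 1 = 0"
    using n by simp_all
  then show "\<alpha> = 0 \<and> \<beta> = 0"
    using n a b by (auto simp: uniform_vec_def alternating_vec_def)
next
  fix v assume "v \<in> carrier_vec (n+1)" "mmat n a b (c_trans n a) *\<^sub>v v = l_trans n a \<cdot>\<^sub>v v"
  then show "\<exists>\<alpha> \<beta>. v = \<alpha> \<cdot>\<^sub>v uniform_vec n (- 4 * a * b) + \<beta> \<cdot>\<^sub>v alternating_vec n"
    using eigenspace_c_trans[OF n b a] by blast
qed

lemma lam_min_c_upp:
  assumes n: "3 \<le> n" and "even n" and b: "b\<^sup>2 = 1" and a: "a < 1 / 4"
  shows "lam_min n a b (c_upp n a) = l_upp n a"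
    and "lam_min n a b c \<le> l_upp n a"
    and "eig_mult (mmat n a b (c_upp n a)) (l_upp n a) = 1"
proof -
  have b': "(- b)\<^sup>2 = 1" and a': "- 1 / 4 < - a" using b a by simp_all
  note low = lam_max_c_low[OF n b' a']
  show "lam_min n a b (c_upp n a) = l_upp n a"
    using low(1) by (simp add: lam_min_eq_uminus_lam_max[OF n \<open>even n\<close>] extremal_points_uminus)
  show "lam_min n a b c \<le> l_upp n a"
    using low(2)[of "- c"] by (simp add: lam_min_eq_uminus_lam_max[OF n \<open>even n\<close>] extremal_points_uminus)
  have "mmat n a b (c_upp n a) = - mmat n (- a) (- b) (c_low n (- a))"
    using mmat_uminus[of n "- a" "- b" "c_low n (- a)"] by (simp add: extremal_points_uminus)
  then show "eig_mult (mmat n a b (c_upp n a)) (l_upp n a) = 1"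
    using low(3)
    by (simp add: extremal_points_uminus eig_mult_real_symmetric_uminus[OF mmat_carrier transpose_mmat])
qed

lemma lam_min_c_trans:
  assumes n: "3 \<le> n" and "even n" and b: "b\<^sup>2 = 1" and a: "1 / 4 \<le> a"
  shows "lam_min n a b (c_trans n a) = l_trans n a"
    and "lam_min n a b c \<le> l_trans n a"
proof -
  have b': "(- b)\<^sup>2 = 1" and a': "- a \<le> - 1 / 4" using b a by simp_all
  note trans = lam_max_c_trans[OF n \<open>even n\<close> b' a']
  show "lam_min n a b (c_trans n a) = l_trans n a"
    using trans(1) by (simp add: lam_min_eq_uminus_lam_max[OF n \<open>even n\<close>] extremal_points_uminus)
  show "lam_min n a b c \<le> l_trans n a"
    using trans(2)[of "- c"] by (simp add: lam_min_eq_uminus_lam_max[OF n \<open>even n\<close>] extremal_points_uminus)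
qed

theorem corollary5:
  fixes n :: nat and a b :: real
  assumes "even n" and "n > 2" and "b = 1 \<or> b = -1"
  shows
   "(a \<le> -1/4 \<longrightarrow>
       lam_max n a b (c_trans n a) = l_trans n a
     \<and> (\<forall>c. l_trans n a \<le> lam_max n a b c)
     \<and> eig_mult (mmat n a b (c_trans n a)) (l_trans n a) = 2)
  \<and> (a > -1/4 \<longrightarrow>
       lam_max n a b (c_low n a) = l_low n a
     \<and> (\<forall>c. l_low n a \<le> lam_max n a b c)
     \<and> eig_mult (mmat n a b (c_low n a)) (l_low n a) = 1)
  \<and> (a \<ge> 1/4 \<longrightarrow>
       lam_min n a b (c_trans n a) = l_trans n a
     \<and> (\<forall>c. lam_min n a b c \<le> l_trans n a)
     \<and> eig_mult (mmat n a b (c_trans n a)) (l_trans n a) = 2)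
  \<and> (a < 1/4 \<longrightarrow>
       lam_min n a b (c_upp n a) = l_upp n a
     \<and> (\<forall>c. lam_min n a b c \<le> l_upp n a)
     \<and> eig_mult (mmat n a b (c_upp n a)) (l_upp n a) = 1)"
proof -
  have n: "3 \<le> n" using assms(2) by simp
  have b: "b\<^sup>2 = 1" using assms(3) by auto
  have "a \<noteq> 0" if "a \<le> -1/4 \<or> 1/4 \<le> a" using that by auto
  then show ?thesis
    using lam_max_c_trans[OF n assms(1) b] lam_max_c_low[OF n b] eig_mult_l_trans[OF n assms(1) b]
      lam_min_c_trans[OF n assms(1) b] lam_min_c_upp[OF n assms(1) b]
    by simp
qed

end
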